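(* Let $G$ be a connected weighted multigraph on the vertex set $V$, $|V|=n\ge 2$, with positive edge weights, weighted adjacency matrix $A$ and spectral radius $\rho=\rho(A)$. For $t\in(0,\rho^{-1})$ let $R_t=(I-tA)^{-1}=(r_{ij}(t))$ and $d_t(i,j)=\tfrac12\bigl(\ln r_{ii}(t)+\ln r_{jj}(t)\bigr)-\ln r_{ij}(t)$. Then for all distinct $i,j\in V$ and all $t\in(0,\rho^{-1})$, $$d_t(i,j)=-\tfrac12\ln\Bigl(\bigl(t^{-1}I-A_{jj}\bigr)^{-1}_i\,a_{\setminus j\,j}\;\bigl(t^{-1}I-A_{ii}\bigr)^{-1}_j\,a_{\setminus i\,i}\Bigr).$$
   Context: $G$ may have loops and multiple edges; $A=(a_{ij})$ has $a_{ij}$ equal to the sum of weights of the edges joining $i$ and $j$. All matrices are indexed by the vertices. For a matrix $M$ and vertex $j$, $M_{jj}$ is the submatrix obtained by deleting row $j$ and column $j$ (its rows and columns remain indexed by $V\setminus\{j\}$); for an invertible matrix $N$, $N^{-1}_i$ denotes the row of $N^{-1}$ indexed by vertex $i$; $a_{\setminus j\,j}$ is the $j$th column of $A$ with the entry $a_{jj}$ removed (a vector indexed by $V\setminus\{j\}$). *)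

theory Defs
  imports "Jordan_Normal_Form.Spectral_Radius" "Jordan_Normal_Form.Gauss_Jordan_Elimination"
begin

text \<open>Vertices are 0..<n. A weighted multigraph is given by a finite edge set E,
  an endpoint map (a set of one vertex for a loop, two vertices otherwise) and
  positive weights.\<close>

definition wadj :: "nat \<Rightarrow> 'e set \<Rightarrow> ('e \<Rightarrow> nat set) \<Rightarrow> ('e \<Rightarrow> real) \<Rightarrow> real mat" where
  "wadj n E ends w = mat n n (\<lambda>(i,j). \<Sum>e\<in>{e\<in>E. ends e = {i,j}}. w e)"

definition multigraph_connected :: "nat \<Rightarrow> 'e set \<Rightarrow> ('e \<Rightarrow> nat set) \<Rightarrow> bool" where
  "multigraph_connected n E ends \<longleftrightarrow>
     (\<forall>i<n. \<forall>j<n. (\<lambda>x y. \<exists>e\<in>E. ends e = {x,y})\<^sup>*\<^sup>* i j)"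

definition resolvent :: "real mat \<Rightarrow> real \<Rightarrow> real mat" where
  "resolvent A t = the (mat_inverse (1\<^sub>m (dim_row A) - t \<cdot>\<^sub>m A))"

definition dist_t :: "real mat \<Rightarrow> real \<Rightarrow> nat \<Rightarrow> nat \<Rightarrow> real" where
  "dist_t A t i j = (ln (resolvent A t $$ (i,i)) + ln (resolvent A t $$ (j,j))) / 2
                    - ln (resolvent A t $$ (i,j))"

text \<open>Position of vertex i (i \<noteq> j) among the remaining vertices after deleting j.\<close>
definition del_pos :: "nat \<Rightarrow> nat \<Rightarrow> nat" where
  "del_pos j i = (if i < j then i else i - 1)"

definition vec_delete :: "'a vec \<Rightarrow> nat \<Rightarrow> 'a vec" where
  "vec_delete v j = vec (dim_vec v - 1) (\<lambda>k. v $ insert_index j k)"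

definition cut_term :: "real mat \<Rightarrow> real \<Rightarrow> nat \<Rightarrow> nat \<Rightarrow> real" where
  "cut_term A t i j =
     row (the (mat_inverse ((1/t) \<cdot>\<^sub>m 1\<^sub>m (dim_row A - 1) - mat_delete A j j))) (del_pos j i)
       \<bullet> vec_delete (col A j) j"

end

theory Submission
  imports Defs
begin

text \<open>Write \<open>R = (I - tA)\<^sup>-\<^sup>1\<close>. Since \<open>t \<rho>(A) < 1\<close>, the powers of \<open>tA\<close> tend to zero, so
  \<open>I - tA\<close> is invertible and \<open>R = \<Sum>\<^sub>k (tA)\<^sup>k\<close>. All terms are nonnegative, and as the graph is
  connected every entry is positive in some power, so \<open>R\<close> is positive; it is symmetric because
  \<open>A\<close> is. Deleting row \<open>j\<close> from \<open>(t\<^sup>-\<^sup>1 I - A) (t R) = I\<close> shows that column \<open>j\<close> of \<open>R\<close> without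
  its \<open>j\<close>-th entry solves \<open>(t\<^sup>-\<^sup>1 I - A\<^sub>j\<^sub>j) x = r\<^sub>j\<^sub>j a\<close>, where \<open>a\<close> is column \<open>j\<close> of \<open>A\<close> without its
  \<open>j\<close>-th entry. By the cofactor formula \<open>det (t\<^sup>-\<^sup>1 I - A\<^sub>j\<^sub>j)\<close> is a nonzero multiple of \<open>r\<^sub>j\<^sub>j\<close>,
  so the system is nonsingular and \<open>r\<^sub>i\<^sub>j = r\<^sub>j\<^sub>j\<close> times the \<open>(i,j)\<close> cut term. Hence the product of
  the two cut terms is \<open>r\<^sub>i\<^sub>j\<^sup>2 / (r\<^sub>i\<^sub>i r\<^sub>j\<^sub>j)\<close>, whose logarithm is \<open>-2 d\<^sub>t(i,j)\<close>.\<close>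

section \<open>Spectral radius and decay of matrix powers\<close>

lemma smult_pow_mat:
  fixes A :: "'a :: comm_ring_1 mat"
  assumes "A \<in> carrier_mat n n"
  shows "(c \<cdot>\<^sub>m A) ^\<^sub>m k = c ^ k \<cdot>\<^sub>m A ^\<^sub>m k"
proof (induction k)
  case (Suc k)
  have Ak: "A ^\<^sub>m k \<in> carrier_mat n n" using assms by (rule pow_carrier_mat)
  have "(c \<cdot>\<^sub>m A) ^\<^sub>m Suc k = c ^ k \<cdot>\<^sub>m A ^\<^sub>m k * (c \<cdot>\<^sub>m A)" using Suc by simp
  also have "\<dots> = c ^ Suc k \<cdot>\<^sub>m A ^\<^sub>m Suc k"
    using assms Ak by (intro eq_matI) (auto simp: scalar_prod_def sum_distrib_left ac_simps)
  finally show ?case .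
qed (use assms in auto)

lemma spectral_radius_smult_le:
  fixes A :: "complex mat"
  assumes A: "A \<in> carrier_mat n n" and n: "n > 0" and c: "c \<noteq> 0"
  shows "spectral_radius (c \<cdot>\<^sub>m A) \<le> norm c * spectral_radius A"
proof -
  have cA: "c \<cdot>\<^sub>m A \<in> carrier_mat n n" using A by simp
  obtain \<mu> where "\<mu> \<in> spectrum (c \<cdot>\<^sub>m A)" and radius: "spectral_radius (c \<cdot>\<^sub>m A) = norm \<mu>"
    using spectral_radius_mem_max(1)[OF cA n] by auto
  then obtain v where v: "v \<in> carrier_vec n" "v \<noteq> 0\<^sub>v n" "(c \<cdot>\<^sub>m A) *\<^sub>v v = \<mu> \<cdot>\<^sub>v v"
    using cA unfolding spectrum_def eigenvalue_def eigenvector_def by auto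
  have "A *\<^sub>v v = (1 / c) \<cdot>\<^sub>v ((c \<cdot>\<^sub>m A) *\<^sub>v v)"
    using A v(1) c by (intro eq_vecI) (auto simp: scalar_prod_def sum_distrib_left)
  also have "\<dots> = (\<mu> / c) \<cdot>\<^sub>v v" unfolding v(3) smult_smult_assoc by simp
  finally have "A *\<^sub>v v = (\<mu> / c) \<cdot>\<^sub>v v" .
  then have "\<mu> / c \<in> spectrum A"
    using A v unfolding spectrum_def eigenvalue_def eigenvector_def by auto
  then have "norm (\<mu> / c) \<le> spectral_radius A"
    by (intro spectral_radius_mem_max(2)[OF A n] imageI)
  then have "norm \<mu> / norm c \<le> spectral_radius A" by (simp add: norm_divide)
  then have "norm \<mu> \<le> norm c * spectral_radius A"
    using c by (simp add: pos_divide_le_eq mult.commute)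
  then show ?thesis unfolding radius .
qed

lemma pow_mat_tendsto_zero:
  fixes A :: "complex mat"
  assumes A: "A \<in> carrier_mat n n" and radius: "spectral_radius A < 1" and ij: "i < n" "j < n"
  shows "(\<lambda>k. (A ^\<^sub>m k) $$ (i,j)) \<longlonglongrightarrow> 0"
proof -
  have n: "n > 0" using ij by auto
  have "0 \<le> spectral_radius A" using spectral_radius_mem_max(1)[OF A n] by auto
  \<comment> \<open>The library bounds the powers of a matrix of spectral radius \<open>< 1\<close>; applied to \<open>A / q\<close>
    with \<open>\<rho>(A) < q < 1\<close>, this bound becomes geometric decay of the powers of \<open>A\<close>.\<close>
  define q where "q = (spectral_radius A + 1) / 2"
  have q: "0 < q" "q < 1" "spectral_radius A < q" using radius \<open>0 \<le> spectral_radius A\<close>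
    unfolding q_def by auto
  define B where "B = complex_of_real (1 / q) \<cdot>\<^sub>m A"
  have B: "B \<in> carrier_mat n n" using A unfolding B_def by simp
  have "spectral_radius B \<le> spectral_radius A / q"
    using spectral_radius_smult_le[OF A n, of "complex_of_real (1 / q)"] q
    unfolding B_def by (simp add: norm_divide)
  also have "\<dots> < 1" using q by simp
  finally obtain c where c: "\<And>k. norm_bound (B ^\<^sub>m k) c"
    using spectral_radius_jnf_norm_bound_less_1_upper_triangular[OF B] by blast
  have bound: "norm ((A ^\<^sub>m k) $$ (i,j)) \<le> norm (q ^ k) * c" for k
  proof -
    have "(A ^\<^sub>m k) $$ (i,j) = complex_of_real (q ^ k) * (B ^\<^sub>m k) $$ (i,j)"
      using q(1) A ij unfolding B_def smult_pow_mat[OF A] by (simp add: power_one_over)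
    moreover have "norm ((B ^\<^sub>m k) $$ (i,j)) \<le> c"
      using c[of k] ij B unfolding norm_bound_def by auto
    ultimately show ?thesis
      using q(1) by (simp add: norm_mult norm_power mult_left_mono)
  qed
  have "(\<lambda>k. q ^ k) \<longlonglongrightarrow> 0" using q by (intro LIMSEQ_power_zero) auto
  then show ?thesis by (rule tendsto_0_le[where K = c]) (intro always_eventually allI bound)
qed

lemma real_pow_mat_tendsto_zero:
  fixes A :: "real mat"
  assumes A: "A \<in> carrier_mat n n" and radius: "spectral_radius (map_mat complex_of_real A) < 1"
    and ij: "i < n" "j < n"
  shows "(\<lambda>k. (A ^\<^sub>m k) $$ (i,j)) \<longlonglongrightarrow> 0"
proof -
  have "(\<lambda>k. (map_mat complex_of_real A ^\<^sub>m k) $$ (i,j)) \<longlonglongrightarrow> 0"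
    using A radius ij by (intro pow_mat_tendsto_zero) auto
  then have "(\<lambda>k. complex_of_real ((A ^\<^sub>m k) $$ (i,j))) \<longlonglongrightarrow> complex_of_real 0"
    using A ij by (simp add: of_real_hom.mat_hom_pow[OF A, symmetric])
  then show ?thesis by (simp only: tendsto_of_real_iff)
qed

lemma spectral_radius_smult_real_lt_1:
  fixes A :: "real mat"
  assumes A: "A \<in> carrier_mat n n" and n: "n > 0"
    and t: "0 < t" "t < 1 / spectral_radius (map_mat complex_of_real A)"
  shows "spectral_radius (map_mat complex_of_real (t \<cdot>\<^sub>m A)) < 1"
proof -
  let ?\<rho> = "spectral_radius (map_mat complex_of_real A)"
  have "?\<rho> > 0" using t by (metis less_trans zero_less_divide_1_iff)
  have "map_mat complex_of_real (t \<cdot>\<^sub>m A) = complex_of_real t \<cdot>\<^sub>m map_mat complex_of_real A"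
    by (intro eq_matI) auto
  also have "spectral_radius \<dots> \<le> t * ?\<rho>"
    using spectral_radius_smult_le[of "map_mat complex_of_real A" n "complex_of_real t", OF _ n] A t
    by simp
  also have "\<dots> < 1" using t \<open>?\<rho> > 0\<close> by (simp add: less_divide_eq)
  finally show ?thesis .
qed

section \<open>Neumann series\<close>

lemma det_one_minus_mat_neq_0:
  fixes B :: "real mat"
  assumes B: "B \<in> carrier_mat n n"
    and powers: "\<And>i j. i < n \<Longrightarrow> j < n \<Longrightarrow> (\<lambda>k. (B ^\<^sub>m k) $$ (i,j)) \<longlonglongrightarrow> 0"
  shows "det (1\<^sub>m n - B) \<noteq> 0"
proof
  have M: "1\<^sub>m n - B \<in> carrier_mat n n" using B by (simp add: minus_carrier_mat)
  assume "det (1\<^sub>m n - B) = 0"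
  then obtain v where v: "v \<in> carrier_vec n" "v \<noteq> 0\<^sub>v n" "(1\<^sub>m n - B) *\<^sub>v v = 0\<^sub>v n"
    using det_0_iff_vec_prod_zero_field[OF M] by blast
  have "v - B *\<^sub>v v = 0\<^sub>v n"
    using minus_mult_distrib_mat_vec[OF one_carrier_mat B v(1)] v by simp
  then have "v $ a - (B *\<^sub>v v) $ a = 0" if "a < n" for a
    using B v(1) that by (metis carrier_matD(1) dim_mult_mat_vec index_minus_vec(1) index_zero_vec(1))
  then have fixed: "B *\<^sub>v v = v" using B v(1) by (intro eq_vecI) auto
  have fixed_pow: "B ^\<^sub>m k *\<^sub>v v = v" for k
  proof (induction k)
    case (Suc k)
    have Bk: "B ^\<^sub>m k \<in> carrier_mat n n" using B by (rule pow_carrier_mat)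
    show ?case using assoc_mult_mat_vec[OF Bk B v(1)] Suc fixed by simp
  qed (use v(1) B in simp)
  have "v $ i = 0" if i: "i < n" for i
  proof -
    have "(\<lambda>k. \<Sum>l<n. (B ^\<^sub>m k) $$ (i,l) * v $ l) \<longlonglongrightarrow> (\<Sum>l<n. 0 * v $ l)"
      using powers i by (intro tendsto_intros) auto
    moreover have "(\<Sum>l<n. (B ^\<^sub>m k) $$ (i,l) * v $ l) = v $ i" for k
      using arg_cong[OF fixed_pow[of k], of "\<lambda>w. w $ i"] i B v(1)
      by (simp add: scalar_prod_def lessThan_atLeast0)
    ultimately show ?thesis by (simp add: LIMSEQ_const_iff)
  qed
  then have "v = 0\<^sub>v n" using v(1) by (intro eq_vecI) auto
  with v(2) show False by contradiction
qed

lemma neumann_series: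
  fixes B R :: "real mat"
  assumes B: "B \<in> carrier_mat n n" and R: "R \<in> carrier_mat n n" and inv: "(1\<^sub>m n - B) * R = 1\<^sub>m n"
    and powers: "\<And>i j. i < n \<Longrightarrow> j < n \<Longrightarrow> (\<lambda>k. (B ^\<^sub>m k) $$ (i,j)) \<longlonglongrightarrow> 0"
    and ij: "i < n" "j < n"
  shows "(\<lambda>k. (B ^\<^sub>m k) $$ (i,j)) sums R $$ (i,j)"
proof -
  have BR: "B * R \<in> carrier_mat n n" using B R by simp
  have "R - B * R = 1\<^sub>m n" using inv minus_mult_distrib_mat[of "1\<^sub>m n" n n B R n] B R by simp
  then have "R $$ (a,b) - (B * R) $$ (a,b) = 1\<^sub>m n $$ (a,b)" if "a < n" "b < n" for a b
    using B R that by (metis carrier_matD index_minus_mat(1) index_mult_mat(2,3))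
  then have R_eq: "R = 1\<^sub>m n + B * R"
    using B R by (intro eq_matI) (auto simp: algebra_simps)
  have remainder: "R $$ (i,j) = (\<Sum>k<N. (B ^\<^sub>m k) $$ (i,j)) + (B ^\<^sub>m N * R) $$ (i,j)" for N
  proof (induction N)
    case (Suc N)
    have BN: "B ^\<^sub>m N \<in> carrier_mat n n" using B by (rule pow_carrier_mat)
    have "B ^\<^sub>m N * R = B ^\<^sub>m N * (1\<^sub>m n + B * R)" using R_eq by simp
    also have "\<dots> = B ^\<^sub>m N + B ^\<^sub>m Suc N * R"
      using mult_add_distrib_mat[OF BN one_carrier_mat BR] assoc_mult_mat[OF BN B R] right_mult_one_mat[OF BN] by simp
    finally show ?case using Suc B R ij by (simp del: pow_mat.simps)
  qed (use B R ij in simp)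
  have "(\<lambda>N. (B ^\<^sub>m N * R) $$ (i,j)) \<longlonglongrightarrow> 0"
  proof -
    have "(\<lambda>N. \<Sum>l<n. (B ^\<^sub>m N) $$ (i,l) * R $$ (l,j)) \<longlonglongrightarrow> (\<Sum>l<n. 0 * R $$ (l,j))"
      using powers ij by (intro tendsto_intros) auto
    moreover have "(B ^\<^sub>m N * R) $$ (i,j) = (\<Sum>l<n. (B ^\<^sub>m N) $$ (i,l) * R $$ (l,j))" for N
      using B R ij by (simp add: scalar_prod_def lessThan_atLeast0)
    ultimately show ?thesis by simp
  qed
  then have "(\<lambda>N. R $$ (i,j) - (B ^\<^sub>m N * R) $$ (i,j)) \<longlonglongrightarrow> R $$ (i,j) - 0"
    by (intro tendsto_intros)
  moreover have "R $$ (i,j) - (B ^\<^sub>m N * R) $$ (i,j) = (\<Sum>k<N. (B ^\<^sub>m k) $$ (i,j))" for N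
    using remainder[of N] by simp
  ultimately show ?thesis unfolding sums_def by simp
qed

lemma pow_mat_nonneg:
  fixes B :: "'a :: linordered_semidom mat"
  assumes B: "B \<in> carrier_mat n n" and nonneg: "\<And>a b. a < n \<Longrightarrow> b < n \<Longrightarrow> 0 \<le> B $$ (a,b)"
    and xy: "x < n" "y < n"
  shows "0 \<le> (B ^\<^sub>m k) $$ (x,y)"
  using xy(2)
proof (induction k arbitrary: y)
  case (Suc k)
  have "B ^\<^sub>m k \<in> carrier_mat n n" using B by (rule pow_carrier_mat)
  then show ?case
    using B xy(1) Suc nonneg by (auto simp: scalar_prod_def intro!: sum_nonneg)
qed (use B xy in simp)

lemma pow_mat_pos_if_rtranclp:
  fixes B :: "'a :: linordered_semidom mat"
  assumes B: "B \<in> carrier_mat n n" and nonneg: "\<And>a b. a < n \<Longrightarrow> b < n \<Longrightarrow> 0 \<le> B $$ (a,b)"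
    and edges: "\<And>a b. r a b \<Longrightarrow> a < n \<and> b < n \<and> 0 < B $$ (a,b)"
    and path: "r\<^sup>*\<^sup>* x y" and x: "x < n"
  shows "\<exists>k. 0 < (B ^\<^sub>m k) $$ (x,y)"
  using path
proof (induction rule: rtranclp_induct)
  case base
  show ?case using B x by (intro exI[of _ 0]) simp
next
  case (step y z)
  then obtain k where k: "0 < (B ^\<^sub>m k) $$ (x,y)" by blast
  have yz: "y < n" "z < n" "0 < B $$ (y,z)" using edges[OF step(2)] by auto
  have Bk: "B ^\<^sub>m k \<in> carrier_mat n n" using B by (rule pow_carrier_mat)
  have "0 < (B ^\<^sub>m k) $$ (x,y) * B $$ (y,z)" using k yz by simp
  also have "\<dots> \<le> (\<Sum>l\<in>{0..<n}. (B ^\<^sub>m k) $$ (x,l) * B $$ (l,z))"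
    using yz x by (intro member_le_sum) (auto intro: mult_nonneg_nonneg pow_mat_nonneg[OF B nonneg] nonneg)
  also have "\<dots> = (B ^\<^sub>m Suc k) $$ (x,z)" using x yz Bk B by (simp add: scalar_prod_def)
  finally show ?case by blast
qed

lemma inverse_one_minus_mat_pos:
  fixes B R :: "real mat"
  assumes B: "B \<in> carrier_mat n n" and R: "R \<in> carrier_mat n n" and inv: "(1\<^sub>m n - B) * R = 1\<^sub>m n"
    and powers: "\<And>i j. i < n \<Longrightarrow> j < n \<Longrightarrow> (\<lambda>k. (B ^\<^sub>m k) $$ (i,j)) \<longlonglongrightarrow> 0"
    and nonneg: "\<And>a b. a < n \<Longrightarrow> b < n \<Longrightarrow> 0 \<le> B $$ (a,b)"
    and edges: "\<And>a b. r a b \<Longrightarrow> a < n \<and> b < n \<and> 0 < B $$ (a,b)"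
    and path: "r\<^sup>*\<^sup>* x y" and xy: "x < n" "y < n"
  shows "0 < R $$ (x,y)"
proof -
  obtain k where "0 < (B ^\<^sub>m k) $$ (x,y)"
    using pow_mat_pos_if_rtranclp[OF B nonneg edges path xy(1)] by blast
  also have "(B ^\<^sub>m k) $$ (x,y) \<le> R $$ (x,y)"
  proof -
    have sums: "(\<lambda>k. (B ^\<^sub>m k) $$ (x,y)) sums R $$ (x,y)"
      by (rule neumann_series[OF B R inv powers xy])
    have "(\<Sum>l\<in>{k}. (B ^\<^sub>m l) $$ (x,y)) \<le> (\<Sum>l. (B ^\<^sub>m l) $$ (x,y))"
      using sums xy by (intro sum_le_suminf sums_summable pow_mat_nonneg[OF B nonneg]) auto
    then show ?thesis using sums_unique[OF sums] by simp
  qed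
  finally show ?thesis .
qed

section \<open>Inverses and principal submatrices\<close>

lemma mat_inverse_if_det_neq_0:
  fixes M :: "'a :: field mat"
  assumes M: "M \<in> carrier_mat n n" and det: "det M \<noteq> 0"
  obtains Q where "mat_inverse M = Some Q" "M * Q = 1\<^sub>m n" "Q * M = 1\<^sub>m n" "Q \<in> carrier_mat n n"
proof (cases "mat_inverse M")
  case None
  then show ?thesis
    using mat_inverse(1)[OF M None, of undefined] det_non_zero_imp_unit[OF M det, of undefined] by blast
next
  case (Some Q)
  then show ?thesis using mat_inverse(2)[OF M Some] that by blast
qed

lemma transpose_smult_mat: "transpose_mat (c \<cdot>\<^sub>m A) = c \<cdot>\<^sub>m transpose_mat A"
  by (intro eq_matI) auto

lemma transpose_inverse_of_symmetric:
  fixes M R :: "'a :: comm_ring_1 mat"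
  assumes M: "M \<in> carrier_mat n n" and R: "R \<in> carrier_mat n n" and inv: "M * R = 1\<^sub>m n"
    and sym: "transpose_mat M = M"
  shows "transpose_mat R = R"
proof -
  have RT: "transpose_mat R \<in> carrier_mat n n" using R by simp
  have "transpose_mat R * M = transpose_mat (M * R)"
    using transpose_mult[OF M R] sym by simp
  then have left_inv: "transpose_mat R * M = 1\<^sub>m n" using inv by simp
  have "transpose_mat R = transpose_mat R * (M * R)" using inv RT by simp
  also have "\<dots> = (transpose_mat R * M) * R" using assoc_mult_mat[OF RT M R] by simp
  also have "\<dots> = R" using left_inv R by simp
  finally show ?thesis .
qed

lemma det_mat_delete_eq:
  fixes M R :: "'a :: comm_ring_1 mat"
  assumes M: "M \<in> carrier_mat n n" and R: "R \<in> carrier_mat n n" and inv: "M * R = 1\<^sub>m n"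
    and j: "j < n"
  shows "det (mat_delete M j j) = det M * R $$ (j,j)"
proof -
  have adj: "adj_mat M \<in> carrier_mat n n" by (rule adj_mat(1)[OF M])
  have "adj_mat M = adj_mat M * (M * R)" using inv adj by simp
  also have "\<dots> = (adj_mat M * M) * R" using assoc_mult_mat[OF adj M R] by simp
  also have "\<dots> = det M \<cdot>\<^sub>m R"
    using adj_mat(3)[OF M] mult_smult_assoc_mat[OF one_carrier_mat R] R by simp
  finally have "adj_mat M $$ (j,j) = det M * R $$ (j,j)" using R j by simp
  then show ?thesis using M j by (simp add: adj_mat_def cofactor_def)
qed

lemma vec_delete_mult_mat_vec:
  fixes M :: "'a :: comm_ring_1 mat"
  assumes M: "M \<in> carrier_mat n n" and v: "v \<in> carrier_vec n" and j: "j < n"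
  shows "vec_delete (M *\<^sub>v v) j
    = mat_delete M j j *\<^sub>v vec_delete v j + v $ j \<cdot>\<^sub>v vec_delete (col M j) j"
proof -
  obtain m where n: "n = Suc m" using j by (cases n) auto
  show ?thesis
  proof (rule eq_vecI)
    fix p assume "p < dim_vec (mat_delete M j j *\<^sub>v vec_delete v j + v $ j \<cdot>\<^sub>v vec_delete (col M j) j)"
    then have p: "p < m" using M n by (simp add: vec_delete_def)
    define P where "P = insert_index j p"
    have P: "P < n" using p n unfolding P_def insert_index_def by auto
    have "(M *\<^sub>v v) $ P = (\<Sum>l\<in>{0..<Suc m}. M $$ (P,l) * v $ l)"
      using M v P n by (simp add: scalar_prod_def)
    also have "\<dots> = M $$ (P,j) * v $ j + (\<Sum>l\<in>{0..<Suc m} - {j}. M $$ (P,l) * v $ l)"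
      using j n by (subst sum.remove[of _ j]) auto
    also have "(\<Sum>l\<in>{0..<Suc m} - {j}. M $$ (P,l) * v $ l)
        = (\<Sum>k\<in>{0..<m}. M $$ (P, insert_index j k) * v $ insert_index j k)"
      using j n by (simp add: insert_index_image[symmetric] sum.reindex insert_index_inj_on)
    also have "\<dots> = (\<Sum>k\<in>{0..<m}. mat_delete M j j $$ (p,k) * vec_delete v j $ k)"
      using M v j p n unfolding P_def
      by (intro sum.cong) (auto simp: mat_delete_index vec_delete_def)
    finally show "vec_delete (M *\<^sub>v v) j $ p
        = (mat_delete M j j *\<^sub>v vec_delete v j + v $ j \<cdot>\<^sub>v vec_delete (col M j) j) $ p"
      using M v j p n P unfolding P_def by (simp add: vec_delete_def scalar_prod_def mult.commute)
  qed (use M v in \<open>simp add: vec_delete_def\<close>)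
qed

lemma vec_delete_col_inverse:
  fixes M R Q :: "'a :: field mat"
  assumes M: "M \<in> carrier_mat n n" and R: "R \<in> carrier_mat n n" and inv: "M * R = 1\<^sub>m n"
    and j: "j < n"
    and Q: "Q \<in> carrier_mat (n - 1) (n - 1)" and Q_inv: "Q * mat_delete M j j = 1\<^sub>m (n - 1)"
  shows "vec_delete (col R j) j = (- R $$ (j,j)) \<cdot>\<^sub>v (Q *\<^sub>v vec_delete (col M j) j)"
proof -
  define x where "x = vec_delete (col R j) j"
  define m where "m = vec_delete (col M j) j"
  define N where "N = mat_delete M j j"
  have x: "x \<in> carrier_vec (n - 1)" using R unfolding x_def vec_delete_def by simp
  have m: "m \<in> carrier_vec (n - 1)" using M unfolding m_def vec_delete_def by simp
  have N: "N \<in> carrier_mat (n - 1) (n - 1)" using M unfolding N_def by (rule mat_delete_carrier)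
  have "M *\<^sub>v col R j = unit_vec n j" using col_mult2[OF M R j] inv j by simp
  then have "N *\<^sub>v x + R $$ (j,j) \<cdot>\<^sub>v m = vec_delete (unit_vec n j) j"
    using vec_delete_mult_mat_vec[OF M _ j, of "col R j"] R j unfolding x_def m_def N_def by simp
  then have "(N *\<^sub>v x) $ p + R $$ (j,j) * m $ p = 0" if "p < n - 1" for p
    using that N x m j by (auto dest!: arg_cong[where f = "\<lambda>w. w $ p"] simp: vec_delete_def insert_index_def)
  then have Nx: "N *\<^sub>v x = (- R $$ (j,j)) \<cdot>\<^sub>v m"
    using N m by (intro eq_vecI) (auto simp: algebra_simps eq_neg_iff_add_eq_0)
  have "x = Q *\<^sub>v (N *\<^sub>v x)" using assoc_mult_mat_vec[OF Q N x] Q_inv x unfolding N_def by simp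
  also have "\<dots> = (- R $$ (j,j)) \<cdot>\<^sub>v (Q *\<^sub>v m)" unfolding Nx by (rule mult_mat_vec[OF Q m])
  finally show ?thesis unfolding x_def m_def .
qed

section \<open>The resolvent of a weighted multigraph\<close>

lemma resolvent_inverse:
  assumes A: "A \<in> carrier_mat n n" and det: "det (1\<^sub>m n - t \<cdot>\<^sub>m A) \<noteq> 0"
  shows "(1\<^sub>m n - t \<cdot>\<^sub>m A) * resolvent A t = 1\<^sub>m n" "resolvent A t \<in> carrier_mat n n"
proof -
  have M: "1\<^sub>m n - t \<cdot>\<^sub>m A \<in> carrier_mat n n" using A by (simp add: minus_carrier_mat)
  obtain R where "mat_inverse (1\<^sub>m n - t \<cdot>\<^sub>m A) = Some R"
    "(1\<^sub>m n - t \<cdot>\<^sub>m A) * R = 1\<^sub>m n" "R \<in> carrier_mat n n"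
    using mat_inverse_if_det_neq_0[OF M det] by metis
  then show "(1\<^sub>m n - t \<cdot>\<^sub>m A) * resolvent A t = 1\<^sub>m n" "resolvent A t \<in> carrier_mat n n"
    using A unfolding resolvent_def by auto
qed

lemma del_pos_eq_delete_index: "del_pos j i = delete_index j i"
  unfolding del_pos_def delete_index_def by simp

lemma resolvent_offdiag_eq_cut_term:
  fixes A R :: "real mat"
  assumes A: "A \<in> carrier_mat n n" and t: "t \<noteq> 0"
    and R: "R \<in> carrier_mat n n" and inv: "(1\<^sub>m n - t \<cdot>\<^sub>m A) * R = 1\<^sub>m n"
    and ij: "i < n" "j < n" "i \<noteq> j" and Rjj: "R $$ (j,j) \<noteq> 0"
  shows "R $$ (i,j) = R $$ (j,j) * cut_term A t i j"
proof -
  \<comment> \<open>Rescaling to \<open>M = t\<^sup>-\<^sup>1 I - A\<close>, with inverse \<open>t R\<close>, makes the principal submatrix of \<open>M\<close> at \<open>j\<close>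
    exactly the matrix inverted in \<open>cut_term\<close>.\<close>
  define M where "M = (1 / t) \<cdot>\<^sub>m 1\<^sub>m n - A"
  define S where "S = t \<cdot>\<^sub>m R"
  have M: "M \<in> carrier_mat n n" using A unfolding M_def by (simp add: minus_carrier_mat)
  have S: "S \<in> carrier_mat n n" using R unfolding S_def by simp
  have "M * S = (t \<cdot>\<^sub>m M) * R"
    using mult_smult_distrib[OF M R] mult_smult_assoc_mat[OF M R] unfolding S_def by simp
  also have "t \<cdot>\<^sub>m M = 1\<^sub>m n - t \<cdot>\<^sub>m A"
    using A t unfolding M_def by (intro eq_matI) (auto simp: algebra_simps)
  finally have MS: "M * S = 1\<^sub>m n" using inv by simp
  then have "det M * det S = 1" using det_mult[OF M S] by simp
  then have "det (mat_delete M j j) \<noteq> 0"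
    using det_mat_delete_eq[OF M S MS ij(2)] Rjj t S R ij unfolding S_def by auto
  then obtain Q where Q: "mat_inverse (mat_delete M j j) = Some Q"
    "Q * mat_delete M j j = 1\<^sub>m (n - 1)" "Q \<in> carrier_mat (n - 1) (n - 1)"
    using mat_inverse_if_det_neq_0[OF mat_delete_carrier[OF M]] by metis
  have M_del: "mat_delete M j j = (1 / t) \<cdot>\<^sub>m 1\<^sub>m (n - 1) - mat_delete A j j"
    using A ij unfolding M_def
    by (intro eq_matI) (auto simp: mat_delete_def)
  define a where "a = vec_delete (col A j) j"
  define p where "p = del_pos j i"
  have p: "p < n - 1" "insert_index j p = i"
    using ij unfolding p_def del_pos_eq_delete_index
    by (auto simp: insert_delete_index delete_index_def)
  have "vec_delete (col M j) j = - a"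
    using A ij unfolding M_def a_def vec_delete_def
    by (intro eq_vecI) (auto simp: insert_index_def)
  then have "vec_delete (col S j) j = (- S $$ (j,j)) \<cdot>\<^sub>v (Q *\<^sub>v (- a))"
    using vec_delete_col_inverse[OF M S MS ij(2) Q(3,2)] by simp
  then have "S $$ (i,j) = S $$ (j,j) * (row Q p \<bullet> a)"
    using p Q(3) S ij A
    by (auto dest!: arg_cong[where f = "\<lambda>w. w $ p"] simp: vec_delete_def a_def)
  moreover have "row Q p \<bullet> a = cut_term A t i j"
    using A Q(1) M_del unfolding cut_term_def a_def p_def by simp
  ultimately show ?thesis using R ij t unfolding S_def by simp
qed

lemma wadj_carrier: "wadj n E ends w \<in> carrier_mat n n"
  unfolding wadj_def by simp

lemma transpose_wadj: "transpose_mat (wadj n E ends w) = wadj n E ends w"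
  unfolding wadj_def by (intro eq_matI) (auto simp: insert_commute)

lemma wadj_nonneg:
  assumes "\<forall>e\<in>E. w e > 0" "a < n" "b < n"
  shows "0 \<le> wadj n E ends w $$ (a,b)"
  using assms unfolding wadj_def by (auto intro: sum_nonneg less_imp_le)

lemma wadj_pos_if_edge:
  assumes "finite E" "\<forall>e\<in>E. w e > 0" "a < n" "b < n" "e \<in> E" "ends e = {a,b}"
  shows "0 < wadj n E ends w $$ (a,b)"
  using assms unfolding wadj_def by (auto intro!: sum_pos2[of _ e] less_imp_le)

lemma resolvent_wadj:
  fixes n :: nat and E :: "'e set" and ends :: "'e \<Rightarrow> nat set" and w :: "'e \<Rightarrow> real" and t :: real
  defines "A \<equiv> wadj n E ends w" and "R \<equiv> resolvent (wadj n E ends w) t"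
  assumes fin: "finite E" and ends_range: "\<forall>e\<in>E. ends e \<subseteq> {0..<n}"
    and w_pos: "\<forall>e\<in>E. w e > 0"
    and conn: "multigraph_connected n E ends"
    and t: "0 < t" "t < 1 / spectral_radius (map_mat complex_of_real A)"
  shows "(1\<^sub>m n - t \<cdot>\<^sub>m A) * R = 1\<^sub>m n" "R \<in> carrier_mat n n" "transpose_mat R = R"
    and "\<And>a b. a < n \<Longrightarrow> b < n \<Longrightarrow> 0 < R $$ (a,b)"
proof -
  define B where "B = t \<cdot>\<^sub>m A"
  have A: "A \<in> carrier_mat n n" unfolding A_def by (rule wadj_carrier)
  have B: "B \<in> carrier_mat n n" using A unfolding B_def by simp
  have B_nonneg: "0 \<le> B $$ (a,b)" if "a < n" "b < n" for a b
    using that t A wadj_nonneg[OF w_pos] unfolding B_def A_def by simp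
  have edges: "a < n \<and> b < n \<and> 0 < B $$ (a,b)" if "\<exists>e\<in>E. ends e = {a,b}" for a b
    using that ends_range t A wadj_pos_if_edge[OF fin w_pos] unfolding B_def A_def by fastforce
  have powers: "(\<lambda>k. (B ^\<^sub>m k) $$ (a,b)) \<longlonglongrightarrow> 0" if "a < n" "b < n" for a b
    using spectral_radius_smult_real_lt_1[OF A _ t] B that unfolding B_def
    by (intro real_pow_mat_tendsto_zero) auto
  have "det (1\<^sub>m n - B) \<noteq> 0" using B powers by (rule det_one_minus_mat_neq_0)
  then show inv: "(1\<^sub>m n - t \<cdot>\<^sub>m A) * R = 1\<^sub>m n" and R: "R \<in> carrier_mat n n"
    using resolvent_inverse[OF A] unfolding B_def R_def A_def by auto
  show "0 < R $$ (a,b)" if "a < n" "b < n" for a b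
    using conn that unfolding multigraph_connected_def
    by (intro inverse_one_minus_mat_pos[OF B R inv[folded B_def] powers B_nonneg edges]) auto
  have "transpose_mat B = B" unfolding B_def A_def by (simp add: transpose_smult_mat transpose_wadj)
  then show "transpose_mat R = R"
    using transpose_inverse_of_symmetric[OF _ R inv[folded B_def]] transpose_minus[OF one_carrier_mat B] B
    by (simp add: minus_carrier_mat)
qed

theorem theorem2:
  fixes n :: nat and E :: "'e set" and ends :: "'e \<Rightarrow> nat set" and w :: "'e \<Rightarrow> real"
    and A :: "real mat" and t :: real and i j :: nat
  assumes "n \<ge> 2"
    and "finite E"
    and "\<forall>e\<in>E. ends e \<subseteq> {0..<n} \<and> ends e \<noteq> {} \<and> card (ends e) \<le> 2"
    and "\<forall>e\<in>E. w e > 0"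
    and "multigraph_connected n E ends"
    and "A = wadj n E ends w"
    and "0 < t" and "t < 1 / spectral_radius (map_mat complex_of_real A)"
    and "i < n" and "j < n" and "i \<noteq> j"
  shows "dist_t A t i j = - (1/2) * ln (cut_term A t i j * cut_term A t j i)"
proof -
  note ij = assms(9-11)
  define R where "R = resolvent A t"
  have A: "A \<in> carrier_mat n n" unfolding assms(6) by (rule wadj_carrier)
  have "\<forall>e\<in>E. ends e \<subseteq> {0..<n}" using assms(3) by blast
  note resolvent_wadj[OF assms(2) this assms(4,5,7) assms(8)[unfolded assms(6)]]
  then have inv: "(1\<^sub>m n - t \<cdot>\<^sub>m A) * R = 1\<^sub>m n" and R: "R \<in> carrier_mat n n"
    and R_sym: "R $$ (j,i) = R $$ (i,j)" and R_pos: "\<And>a b. a < n \<Longrightarrow> b < n \<Longrightarrow> 0 < R $$ (a,b)"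
    using ij unfolding R_def assms(6) by (auto dest!: arg_cong[where f = "\<lambda>X. X $$ (i,j)"])
  have cut: "cut_term A t a b = R $$ (a,b) / R $$ (b,b)" if "a < n" "b < n" "a \<noteq> b" for a b
    using resolvent_offdiag_eq_cut_term[OF A _ R inv that] R_pos[of b b] that assms(7,8)
    by (simp add: field_simps)
  have "cut_term A t i j * cut_term A t j i = R $$ (i,j) / R $$ (j,j) * (R $$ (i,j) / R $$ (i,i))"
    using cut[of i j] cut[of j i] R_sym ij by auto
  then have "ln (cut_term A t i j * cut_term A t j i)
      = 2 * ln (R $$ (i,j)) - ln (R $$ (j,j)) - ln (R $$ (i,i))"
    using R_pos[of i i] R_pos[of j j] R_pos[of i j] ij by (simp add: ln_mult ln_div)
  then show ?thesis unfolding dist_t_def R_def[symmetric] by (simp add: field_simps)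
qed

end
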